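(* Let $|p|<1$, $|P|<1$, let $n\ge0$ be an integer, and let $a,b,c,q,r$ and $A,B,C,Q,R$ be nonzero complex numbers such that all expressions below are well defined. Then \begin{align*} &\sum_{k=0}^n\frac{\theta(ar^kq^k,\,br^kq^{-k};p)}{\theta(a,b;p)}\,\frac{(a,b;r,p)_k\,(c,a/(bc);q,p)_k}{(q,aq/b;q,p)_k\,(ar/c,bcr;r,p)_k}\\ &\qquad\times\frac{(CR^{-n}/A,\,R^{-n}/(BC);R,P)_k\,(Q^{-n},\,BQ^{-n}/A;Q,P)_k}{(Q^{-n}/C,\,BCQ^{-n}/A;Q,P)_k\,(R^{-n}/A,\,R^{-n}/B;R,P)_k}\,q^k\\ &=\frac{(ar,br;r,p)_n\,(cq,aq/(bc);q,p)_n\,(Q,AQ/B;Q,P)_n\,(AR/C,BCR;R,P)_n}{(q,aq/b;q,p)_n\,(ar/c,bcr;r,p)_n\,(AR,BR;R,P)_n\,(CQ,AQ/(BC);Q,P)_n}\\ &\quad\times\sum_{k=0}^n\frac{\theta(AR^kQ^k,\,BR^kQ^{-k};P)}{\theta(A,B;P)}\,\frac{(A,B;R,P)_k\,(C,A/(BC);Q,P)_k}{(Q,AQ/B;Q,P)_k\,(AR/C,BCR;R,P)_k}\\ &\qquad\times\frac{(cr^{-n}/a,\,r^{-n}/(bc);r,p)_k\,(q^{-n},\,bq^{-n}/a;q,p)_k}{(q^{-n}/c,\,bcq^{-n}/a;q,p)_k\,(r^{-n}/a,\,r^{-n}/b;r,p)_k}\,Q^k. \end{align*}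
   Context: For $|p|<1$ and $x\neq 0$, $\theta(x;p)=(x;p)_\infty(p/x;p)_\infty$ where $(x;p)_\infty=\prod_{k\ge 0}(1-xp^k)$, and $\theta(x_1,\dots,x_m;p)=\prod_{i=1}^m\theta(x_i;p)$. For $a\ne0$ and integer $k\ge0$, $(a;q,p)_k=\prod_{j=0}^{k-1}\theta(aq^j;p)$ (empty product $=1$), and $(a_1,\dots,a_m;q,p)_k=\prod_i(a_i;q,p)_k$. *)

theory Defs
  imports "HOL-Analysis.Analysis"
begin

definition qpinf :: "complex \<Rightarrow> complex \<Rightarrow> complex" where
  "qpinf x p = (\<Prod>k. (1 - x * p ^ k))"

definition theta :: "complex \<Rightarrow> complex \<Rightarrow> complex" where
  "theta x p = qpinf x p * qpinf (p / x) p"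

text \<open>Theta shifted factorial (a;q,p)_k.\<close>
definition epoch :: "complex \<Rightarrow> complex \<Rightarrow> complex \<Rightarrow> nat \<Rightarrow> complex" where
  "epoch a q p k = (\<Prod>j<k. theta (a * q ^ j) p)"

definition sum_num ::
  "complex \<Rightarrow> complex \<Rightarrow> complex \<Rightarrow> complex \<Rightarrow> complex \<Rightarrow> complex \<Rightarrow>
   complex \<Rightarrow> complex \<Rightarrow> complex \<Rightarrow> complex \<Rightarrow> complex \<Rightarrow> complex \<Rightarrow> nat \<Rightarrow> nat \<Rightarrow> complex" where
  "sum_num a b c q r p A B C Q R P n k =
     theta (a * r ^ k * q ^ k) p * theta (b * r ^ k * inverse q ^ k) p
     * epoch a r p k * epoch b r p k * epoch c q p k * epoch (a / (b * c)) q p k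
     * epoch (C * inverse R ^ n / A) R P k * epoch (inverse R ^ n / (B * C)) R P k
     * epoch (inverse Q ^ n) Q P k * epoch (B * inverse Q ^ n / A) Q P k"

definition sum_den ::
  "complex \<Rightarrow> complex \<Rightarrow> complex \<Rightarrow> complex \<Rightarrow> complex \<Rightarrow> complex \<Rightarrow>
   complex \<Rightarrow> complex \<Rightarrow> complex \<Rightarrow> complex \<Rightarrow> complex \<Rightarrow> complex \<Rightarrow> nat \<Rightarrow> nat \<Rightarrow> complex" where
  "sum_den a b c q r p A B C Q R P n k =
     theta a p * theta b p
     * epoch q q p k * epoch (a * q / b) q p k * epoch (a * r / c) r p k * epoch (b * c * r) r p k
     * epoch (inverse Q ^ n / C) Q P k * epoch (B * C * inverse Q ^ n / A) Q P k
     * epoch (inverse R ^ n / A) R P k * epoch (inverse R ^ n / B) R P k"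

definition summand ::
  "complex \<Rightarrow> complex \<Rightarrow> complex \<Rightarrow> complex \<Rightarrow> complex \<Rightarrow> complex \<Rightarrow>
   complex \<Rightarrow> complex \<Rightarrow> complex \<Rightarrow> complex \<Rightarrow> complex \<Rightarrow> complex \<Rightarrow> nat \<Rightarrow> nat \<Rightarrow> complex" where
  "summand a b c q r p A B C Q R P n k =
     sum_num a b c q r p A B C Q R P n k / sum_den a b c q r p A B C Q R P n k * q ^ k"

definition pre_num ::
  "complex \<Rightarrow> complex \<Rightarrow> complex \<Rightarrow> complex \<Rightarrow> complex \<Rightarrow> complex \<Rightarrow>
   complex \<Rightarrow> complex \<Rightarrow> complex \<Rightarrow> complex \<Rightarrow> complex \<Rightarrow> complex \<Rightarrow> nat \<Rightarrow> complex" where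
  "pre_num a b c q r p A B C Q R P n =
     epoch (a * r) r p n * epoch (b * r) r p n * epoch (c * q) q p n * epoch (a * q / (b * c)) q p n
     * epoch Q Q P n * epoch (A * Q / B) Q P n * epoch (A * R / C) R P n * epoch (B * C * R) R P n"

definition pre_den ::
  "complex \<Rightarrow> complex \<Rightarrow> complex \<Rightarrow> complex \<Rightarrow> complex \<Rightarrow> complex \<Rightarrow>
   complex \<Rightarrow> complex \<Rightarrow> complex \<Rightarrow> complex \<Rightarrow> complex \<Rightarrow> complex \<Rightarrow> nat \<Rightarrow> complex" where
  "pre_den a b c q r p A B C Q R P n =
     epoch q q p n * epoch (a * q / b) q p n * epoch (a * r / c) r p n * epoch (b * c * r) r p n
     * epoch (A * R) R P n * epoch (B * R) R P n * epoch (C * Q) Q P n * epoch (A * Q / (B * C)) Q P n"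

end

theory Submission
  imports Defs "HOL-Complex_Analysis.Complex_Analysis"
begin

text \<open>
  The left-hand side pairs the terms of one indefinite bibasic theta sum with the reversed
  partial sums of another. By the indefinite summation of Gasper and Schlosser the partial sums
  telescope to ratios N_m / M_m of theta shifted factorials, and reversing the products
  (x;q,p)_n about their top factor turns N_(n-k) / M_(n-k) into N_n / M_n times exactly the
  reversed factors that occur in the summand. Exchanging the order of the double sum over
  k + j <= n then exchanges the two parameter sets.

  The telescoping step is an instance of Weierstrass' addition formula for theta functions,
  which is proved by a Liouville argument: a function F holomorphic on the punctured plane with
  F(px) = F(x) / x^2 that vanishes at u and 1/u is a constant multiple of theta(xu) theta(x/u).
\<close>

section \<open>The theta function\<close>

lemma convergent_prod_qpinf:
  fixes x p :: complex
  assumes "norm p < 1"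
  shows "convergent_prod (\<lambda>k. 1 - x * p ^ k)"
proof (rule abs_convergent_prod_imp_convergent_prod, rule summable_imp_abs_convergent_prod)
  have "summable (\<lambda>k. norm x * norm p ^ k)"
    using assms by (intro summable_mult summable_geometric) simp
  thus "summable (\<lambda>k. norm (1 - x * p ^ k - 1))"
    by (simp add: norm_mult norm_power)
qed

lemma qpinf_has_prod:
  "norm p < 1 \<Longrightarrow> (\<lambda>k. 1 - x * p ^ k) has_prod qpinf x p"
  unfolding qpinf_def by (rule convergent_prod_has_prod[OF convergent_prod_qpinf])

lemma qpinf_eq_0_iff:
  assumes "norm p < 1"
  shows "qpinf x p = 0 \<longleftrightarrow> (\<exists>k. x * p ^ k = 1)"
proof -
  have "qpinf x p = 0 \<longleftrightarrow> (\<exists>k. 0 = 1 - x * p ^ k)"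
    using has_prod_eq_0_iff[OF qpinf_has_prod[OF assms]] by blast
  also have "\<dots> \<longleftrightarrow> (\<exists>k. x * p ^ k = 1)"
    by (intro ex_cong1) auto
  finally show ?thesis .
qed

lemma qpinf_0_left [simp]: "qpinf 0 p = 1"
  by (simp add: qpinf_def)

lemma qpinf_unfold:
  assumes "norm p < 1"
  shows "qpinf x p = (1 - x) * qpinf (x * p) p"
proof (cases "x = 1")
  case True
  have "qpinf 1 p = 0"
    unfolding qpinf_eq_0_iff[OF assms] by (rule exI[of _ 0]) simp
  thus ?thesis using True by simp
next
  case False
  have "qpinf (x * p) p = (\<Prod>k. 1 - x * p ^ Suc k)"
    by (simp add: qpinf_def mult.assoc)
  also have "\<dots> = qpinf x p / (1 - x)"
    unfolding qpinf_def using False by (subst prodinf_split_head[OF convergent_prod_qpinf[OF assms]]) auto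
  finally show ?thesis using False by simp
qed

lemma theta_0_left [simp]: "theta 0 p = 1"
  by (simp add: theta_def)

lemma theta_0_right: "theta x 0 = 1 - x"
  unfolding theta_def by (subst qpinf_unfold) auto

definition theta_reduced :: "complex \<Rightarrow> complex \<Rightarrow> complex" where
  "theta_reduced x p = qpinf (x * p) p * qpinf (p / x) p"

lemma theta_eq_reduced: "norm p < 1 \<Longrightarrow> theta x p = (1 - x) * theta_reduced x p"
  unfolding theta_def theta_reduced_def by (subst qpinf_unfold) auto

lemma theta_reduced_1_nonzero:
  assumes "norm p < 1"
  shows "theta_reduced 1 p \<noteq> 0"
proof -
  have "norm (p * p ^ k) < 1" for k
    using assms power_less_one_iff[of "norm p" "Suc k"] by (simp add: norm_mult norm_power)
  hence "p * p ^ k \<noteq> 1" for k by (metis less_irrefl norm_one)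
  hence "qpinf p p \<noteq> 0" by (simp add: qpinf_eq_0_iff[OF assms])
  thus ?thesis by (simp add: theta_reduced_def)
qed

lemma theta_1 [simp]: "norm p < 1 \<Longrightarrow> theta 1 p = 0"
  by (simp add: theta_eq_reduced)

lemma theta_reduced_inverse: "x \<noteq> 0 \<Longrightarrow> theta_reduced (inverse x) p = theta_reduced x p"
  by (simp add: theta_reduced_def divide_inverse mult.commute)

lemma theta_inverse:
  assumes "norm p < 1" "x \<noteq> 0"
  shows "theta (inverse x) p = - theta x p / x"
proof -
  have "theta (inverse x) p = (1 - inverse x) * theta_reduced x p"
    using assms by (simp add: theta_eq_reduced theta_reduced_inverse)
  thus ?thesis using assms by (simp add: theta_eq_reduced field_simps)
qed

lemma theta_mult_p:
  assumes "norm p < 1" "p \<noteq> 0" "x \<noteq> 0"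
  shows "theta (p * x) p = - theta x p / x"
proof -
  have "p / (p * x) = inverse x" "p / inverse x = p * x"
    using assms by (simp_all add: field_simps)
  hence "theta (p * x) p = theta (inverse x) p"
    by (simp add: theta_def mult.commute)
  thus ?thesis using theta_inverse[OF assms(1,3)] by simp
qed

lemma theta_eq_0_iff:
  assumes "norm p < 1" "p \<noteq> 0" "x \<noteq> 0"
  shows "theta x p = 0 \<longleftrightarrow> (\<exists>k::int. x = p powi k)"
proof
  assume "theta x p = 0"
  hence "(\<exists>k. x * p ^ k = 1) \<or> (\<exists>k. p / x * p ^ k = 1)"
    by (simp add: theta_def qpinf_eq_0_iff[OF assms(1)])
  thus "\<exists>k::int. x = p powi k"
  proof (elim disjE exE)
    fix k assume "x * p ^ k = 1"
    hence "x = p powi (- int k)" using assms by (simp add: power_int_minus field_simps)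
    thus ?thesis ..
  next
    fix k assume "p / x * p ^ k = 1"
    hence "x = p ^ Suc k" using assms by (simp add: field_simps)
    hence "x = p powi int (Suc k)" by (simp only: power_int_of_nat)
    thus ?thesis ..
  qed
next
  assume "\<exists>k::int. x = p powi k"
  then obtain k :: int where x: "x = p powi k" ..
  show "theta x p = 0"
  proof (cases "k \<le> 0")
    case True
    hence "x * p ^ nat (- k) = 1" using assms by (simp add: x power_int_def flip: power_mult_distrib)
    thus ?thesis by (auto simp: theta_def qpinf_eq_0_iff[OF assms(1)])
  next
    case False
    hence "nat k = Suc (nat (k - 1))" by simp
    hence "x = p * p ^ nat (k - 1)"
      using False by (simp add: x power_int_def)
    hence "p / x * p ^ nat (k - 1) = 1" using assms by simp
    thus ?thesis by (auto simp: theta_def qpinf_eq_0_iff[OF assms(1)])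
  qed
qed

lemma countable_theta_zeros:
  assumes "p \<noteq> 0" "norm p < 1"
  shows "countable {x. theta x p = 0}"
proof (rule countable_subset)
  show "{x. theta x p = 0} \<subseteq> range (\<lambda>k::int. p powi k)"
  proof
    fix x assume "x \<in> {x. theta x p = 0}"
    hence "x \<noteq> 0" "theta x p = 0" by auto
    then obtain k :: int where "x = p powi k"
      using theta_eq_0_iff[OF assms(2,1)] by blast
    thus "x \<in> range (\<lambda>k::int. p powi k)" by simp
  qed
qed simp

lemma qpinf_holomorphic_UNIV:
  assumes p: "norm p < 1"
  shows "(\<lambda>x. qpinf x p) holomorphic_on UNIV"
proof -
  define P where "P N x = (\<Prod>k<N. 1 - x * p ^ k)" for N x
  show ?thesis
  proof (rule holomorphic_uniform_sequence[where f = P])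
    show "P N holomorphic_on UNIV" for N
      unfolding P_def by (intro holomorphic_intros)
    fix z :: complex
    have "uniformly_convergent_on (cball z 1) P"
      unfolding P_def
    proof (rule uniformly_convergent_on_prod')
      show "uniformly_convergent_on (cball z 1) (\<lambda>N x. \<Sum>k<N. norm (1 - x * p ^ k - 1))"
      proof (rule Weierstrass_m_test'[where M = "\<lambda>k. (norm z + 1) * norm p ^ k"])
        show "norm (norm (1 - x * p ^ k - 1)) \<le> (norm z + 1) * norm p ^ k" if "x \<in> cball z 1" for k x
        proof -
          have "norm x \<le> norm z + 1"
            using that norm_triangle_ineq2[of x z] by (simp add: dist_norm norm_minus_commute)
          thus ?thesis by (simp add: norm_mult norm_power mult_right_mono)
        qed
        show "summable (\<lambda>k. (norm z + 1) * norm p ^ k)"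
          using p by (intro summable_mult summable_geometric) simp
      qed
    qed (auto intro!: continuous_intros)
    hence "uniform_limit (cball z 1) P (\<lambda>x. lim (\<lambda>N. P N x)) sequentially"
      by (simp add: uniformly_convergent_uniform_limit_iff)
    moreover have "lim (\<lambda>N. P N x) = qpinf x p" for x
    proof -
      have "(\<lambda>N. P (Suc N) x) \<longlonglongrightarrow> qpinf x p"
        using convergent_prod_LIMSEQ[OF convergent_prod_qpinf[OF p]]
        by (simp add: P_def qpinf_def lessThan_Suc_atMost)
      thus ?thesis by (intro limI) (rule LIMSEQ_imp_Suc)
    qed
    ultimately show "\<exists>d>0. cball z d \<subseteq> UNIV \<and> uniform_limit (cball z d) P (\<lambda>x. qpinf x p) sequentially"
      by (intro exI[of _ 1]) simp
  qed auto
qed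

lemma holomorphic_on_qpinf [holomorphic_intros]:
  assumes "norm p < 1" "f holomorphic_on S"
  shows "(\<lambda>x. qpinf (f x) p) holomorphic_on S"
  using holomorphic_on_compose[OF assms(2) holomorphic_on_subset[OF qpinf_holomorphic_UNIV[OF assms(1)]]]
  by (simp add: o_def)

lemma holomorphic_on_theta [holomorphic_intros]:
  assumes "norm p < 1" "f holomorphic_on S" "\<And>x. x \<in> S \<Longrightarrow> f x \<noteq> 0"
  shows "(\<lambda>x. theta (f x) p) holomorphic_on S"
  unfolding theta_def using assms by (intro holomorphic_intros) auto

lemma holomorphic_on_theta_reduced [holomorphic_intros]:
  assumes "norm p < 1" "f holomorphic_on S" "\<And>x. x \<in> S \<Longrightarrow> f x \<noteq> 0"
  shows "(\<lambda>x. theta_reduced (f x) p) holomorphic_on S"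
  unfolding theta_reduced_def using assms by (intro holomorphic_intros) auto

section \<open>Multiplicatively periodic functions on the punctured plane\<close>

lemma holomorphic_on_imp_continuous_at:
  "f holomorphic_on S \<Longrightarrow> open S \<Longrightarrow> x \<in> S \<Longrightarrow> continuous (at x) f"
  by (simp add: field_differentiable_imp_continuous_at holomorphic_on_imp_differentiable_at)

lemma powi_invariant:
  fixes G :: "complex \<Rightarrow> 'a"
  assumes "p \<noteq> 0" "\<And>x. x \<noteq> 0 \<Longrightarrow> G (p * x) = G x" "x \<noteq> 0"
  shows "G (p powi k * x) = G x"
proof (induction k rule: int_induct[where k = 0])
  case (step1 i)
  have "G (p powi (i + 1) * x) = G (p * (p powi i * x))"
    using assms(1) by (simp add: power_int_add mult_ac)
  also have "\<dots> = G (p powi i * x)"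
    using assms by (intro assms(2)) simp
  finally show ?case using step1 by simp
next
  case (step2 i)
  have "G (p powi i * x) = G (p * (p powi (i - 1) * x))"
    using assms(1) by (simp add: power_int_diff field_simps)
  also have "\<dots> = G (p powi (i - 1) * x)"
    using assms by (intro assms(2)) simp
  finally show ?case using step2 by simp
qed simp

lemma quasi_periodic_zero_powi:
  fixes F :: "complex \<Rightarrow> complex"
  assumes "p \<noteq> 0" "\<And>x. x \<noteq> 0 \<Longrightarrow> F (p * x) = F x / x\<^sup>2" "z \<noteq> 0" "F z = 0"
  shows "F (p powi k * z) = 0"
  using powi_invariant[of p "\<lambda>x. F x = 0", OF assms(1) _ assms(3)] assms(2,4) by simp

lemma exists_powi_in_annulus:
  fixes p x :: complex
  assumes "p \<noteq> 0" "norm p < 1" "x \<noteq> 0"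
  obtains k :: int where "norm p \<le> norm (p powi k * x)" "norm (p powi k * x) \<le> 1"
proof
  define a where "a = norm p"
  define L where "L = log a (norm x)"
  define k where "k = \<lceil>- L\<rceil>"
  have a: "0 < a" "a < 1" using assms by (auto simp: a_def)
  have kL: "0 \<le> k + L" "k + L \<le> 1" unfolding k_def by linarith+
  have "norm (p powi k * x) = a powr (k + L)"
    using a assms(3) by (simp add: norm_mult norm_power_int a_def L_def powr_add powr_real_of_int')
  thus "norm p \<le> norm (p powi k * x)" "norm (p powi k * x) \<le> 1"
    using powr_mono'[OF kL(2), of a] powr_mono'[OF kL(1), of a] a by (simp_all add: a_def)
qed

lemma multiplicatively_periodic_imp_constant:
  fixes G :: "complex \<Rightarrow> complex"
  assumes p: "p \<noteq> 0" "norm p < 1" and hol: "G holomorphic_on - {0}"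
    and periodic: "\<And>x. x \<noteq> 0 \<Longrightarrow> G (p * x) = G x"
  obtains c where "\<And>x. x \<noteq> 0 \<Longrightarrow> G x = c"
proof -
  define K :: "complex set" where "K = cball 0 1 - ball 0 (norm p)"
  have "compact K"
    unfolding K_def by (intro compact_diff) auto
  moreover have "K \<subseteq> - {0}"
    using p by (auto simp: K_def)
  ultimately have "bounded (G ` K)"
    using hol by (intro compact_imp_bounded compact_continuous_image holomorphic_on_imp_continuous_on)
      (auto elim: holomorphic_on_subset)
  moreover have "range (G \<circ> exp) \<subseteq> G ` K"
  proof clarify
    fix w :: complex
    obtain k :: int where "norm p \<le> norm (p powi k * exp w)" "norm (p powi k * exp w) \<le> 1"
      using exists_powi_in_annulus[OF p exp_not_eq_zero] .
    moreover have "G (exp w) = G (p powi k * exp w)"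
      using powi_invariant[of p G, OF p(1) periodic] by simp
    ultimately show "(G \<circ> exp) w \<in> G ` K" by (auto simp: K_def)
  qed
  ultimately have "bounded (range (G \<circ> exp))"
    by (rule bounded_subset)
  moreover have "(G \<circ> exp) holomorphic_on UNIV"
    using hol by (intro holomorphic_on_compose holomorphic_intros) (auto elim: holomorphic_on_subset)
  ultimately obtain c where "\<And>w. G (exp w) = c"
    using Liouville_theorem unfolding constant_on_def by (metis comp_apply UNIV_I)
  hence "G x = c" if "x \<noteq> 0" for x
    using that by (metis exp_Ln)
  thus ?thesis using that by blast
qed

lemma field_differentiable_periodic_orbit:
  fixes G :: "complex \<Rightarrow> complex"
  assumes p: "p \<noteq> 0" and periodic: "\<And>x. x \<noteq> 0 \<Longrightarrow> G (p * x) = G x"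
    and z: "z \<noteq> 0" "G field_differentiable at z"
  shows "G field_differentiable at (p powi k * z)"
proof -
  define x where "x = p powi k * z"
  have x: "x \<noteq> 0" "p powi (- k) * x = z"
    using p z by (simp_all add: x_def power_int_minus)
  have "(G \<circ> (\<lambda>y. p powi (- k) * y)) field_differentiable at x"
    using x z by (intro field_differentiable_compose derivative_intros) simp
  moreover have "(G \<circ> (\<lambda>y. p powi (- k) * y)) y = G y" if "dist y x < norm x" for y
  proof -
    have "y \<noteq> 0" using that by (auto simp: dist_norm)
    thus ?thesis using powi_invariant[of p G, OF p periodic] by simp
  qed
  ultimately have "G field_differentiable at x"
    using field_differentiable_transform_within[of "norm x" x UNIV "G \<circ> (\<lambda>y. p powi (- k) * y)" G] x
    by simp
  thus ?thesis by (simp add: x_def)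
qed

lemma field_differentiable_quotient:
  fixes F D G :: "complex \<Rightarrow> complex"
  assumes F: "F holomorphic_on S" and D: "D holomorphic_on S" and "open S" "x \<in> S" "D x \<noteq> 0"
    and G: "\<And>y. y \<in> S \<Longrightarrow> D y \<noteq> 0 \<Longrightarrow> G y = F y / D y"
  shows "G field_differentiable at x"
proof -
  obtain e where e: "e > 0" "\<And>y. dist x y < e \<Longrightarrow> D y \<noteq> 0"
    using continuous_at_avoid[of x D 0] holomorphic_on_imp_continuous_at[OF D] assms(3-5) by blast
  obtain e' where e': "e' > 0" "ball x e' \<subseteq> S"
    using \<open>open S\<close> \<open>x \<in> S\<close> openE by blast
  define d where "d = min e e'"
  have d: "d > 0" "ball x d \<subseteq> S" "\<And>y. y \<in> ball x d \<Longrightarrow> D y \<noteq> 0"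
    using e e' by (auto simp: d_def)
  show ?thesis
  proof (rule field_differentiable_transform_within[OF d(1) UNIV_I])
    have "(\<lambda>y. F y / D y) holomorphic_on ball x d"
      using d by (intro holomorphic_on_divide holomorphic_on_subset[OF F] holomorphic_on_subset[OF D])
    thus "(\<lambda>y. F y / D y) field_differentiable at x within UNIV"
      using d(1) by (simp add: holomorphic_on_imp_differentiable_at)
    show "F y / D y = G y" if "dist y x < d" for y
      using d that G[of y] by (auto simp: dist_commute)
  qed
qed

lemma continuous_at_vanishing_off_countable:
  fixes f :: "'a::euclidean_space \<Rightarrow> 'b::real_normed_vector"
  assumes "continuous (at z) f" "countable B" "\<And>w. w \<notin> B \<Longrightarrow> f w = 0"
  shows "f z = 0"
proof (rule ccontr)
  assume "f z \<noteq> 0"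
  then obtain e where "e > 0" "\<And>w. dist z w < e \<Longrightarrow> f w \<noteq> 0"
    using continuous_at_avoid[OF assms(1)] by blast
  hence "ball z e \<subseteq> B" using assms(3) by (metis mem_ball subsetI)
  thus False using uncountable_ball[OF \<open>e > 0\<close>] assms(2) countable_subset by blast
qed

section \<open>The addition formula\<close>

definition theta_pm :: "complex \<Rightarrow> complex \<Rightarrow> complex \<Rightarrow> complex" where
  "theta_pm x u p = theta (x * u) p * theta (x / u) p"

lemma holomorphic_on_theta_pm [holomorphic_intros]:
  assumes "norm p < 1" "u \<noteq> 0" "f holomorphic_on S" "\<And>x. x \<in> S \<Longrightarrow> f x \<noteq> 0"
  shows "(\<lambda>x. theta_pm (f x) u p) holomorphic_on S"
  unfolding theta_pm_def using assms by (intro holomorphic_intros) auto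

lemma theta_pm_same [simp]: "norm p < 1 \<Longrightarrow> u \<noteq> 0 \<Longrightarrow> theta_pm u u p = 0"
  by (simp add: theta_pm_def)

lemma theta_pm_inverse_right: "theta_pm x (inverse u) p = theta_pm x u p"
  by (simp add: theta_pm_def divide_inverse mult.commute)

lemma theta_pm_mult_p:
  assumes "norm p < 1" "p \<noteq> 0" "x \<noteq> 0" "u \<noteq> 0"
  shows "theta_pm (p * x) u p = theta_pm x u p / x\<^sup>2"
proof -
  have "theta_pm (p * x) u p = theta (p * (x * u)) p * theta (p * (x / u)) p"
    by (simp add: theta_pm_def mult.assoc)
  also have "\<dots> = (- theta (x * u) p / (x * u)) * (- theta (x / u) p / (x / u))"
    using theta_mult_p[OF assms(1,2), of "x * u"] theta_mult_p[OF assms(1,2), of "x / u"] assms by simp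
  also have "\<dots> = theta_pm x u p / x\<^sup>2"
    using assms by (simp add: theta_pm_def field_simps power2_eq_square)
  finally show ?thesis .
qed

lemma theta_pm_inverse:
  assumes "norm p < 1" "x \<noteq> 0" "u \<noteq> 0"
  shows "theta_pm (inverse x) u p = theta_pm x u p / x\<^sup>2"
proof -
  have "theta_pm (inverse x) u p = theta (inverse (x / u)) p * theta (inverse (x * u)) p"
    by (simp add: theta_pm_def field_simps)
  also have "\<dots> = (- theta (x / u) p / (x / u)) * (- theta (x * u) p / (x * u))"
    using theta_inverse[OF assms(1), of "x / u"] theta_inverse[OF assms(1), of "x * u"] assms by simp
  also have "\<dots> = theta_pm x u p / x\<^sup>2"
    using assms by (simp add: theta_pm_def field_simps power2_eq_square)
  finally show ?thesis .
qed

lemma theta_pm_swap: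
  assumes "norm p < 1" "y \<noteq> 0" "u \<noteq> 0"
  shows "u / y * theta_pm y u p = - theta_pm u y p"
proof -
  have "u / y * theta (y / u) p = - theta (u / y) p"
    using theta_inverse[OF assms(1), of "u / y"] assms by (simp add: inverse_eq_divide)
  hence "theta (y * u) p * (u / y * theta (y / u) p) = - theta_pm u y p"
    by (simp add: theta_pm_def mult.commute)
  thus ?thesis by (simp add: theta_pm_def mult_ac)
qed

lemma theta_pm_eq_0_iff:
  assumes "norm p < 1" "p \<noteq> 0" "x \<noteq> 0" "u \<noteq> 0"
  shows "theta_pm x u p = 0 \<longleftrightarrow> (\<exists>k::int. x = p powi k * u \<or> x = p powi k * inverse u)"
proof -
  have "theta_pm x u p = 0 \<longleftrightarrow> (\<exists>k::int. x * u = p powi k) \<or> (\<exists>k::int. x / u = p powi k)"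
    using assms by (simp add: theta_pm_def theta_eq_0_iff)
  also have "\<dots> \<longleftrightarrow> (\<exists>k::int. x = p powi k * u \<or> x = p powi k * inverse u)"
    using assms by (auto simp: field_simps)
  finally show ?thesis .
qed

lemma inverse_not_in_powi_orbit:
  assumes "p \<noteq> 0" "norm p < 1" "u \<noteq> 0" "theta (u\<^sup>2) p \<noteq> 0"
  shows "inverse u \<noteq> p powi k * u"
proof
  assume "inverse u = p powi k * u"
  hence "u\<^sup>2 = p powi (- k)"
    using assms by (simp add: power_int_minus field_simps power2_eq_square)
  moreover have "u\<^sup>2 \<noteq> 0" using assms(3) by simp
  ultimately have "theta (u\<^sup>2) p = 0"
    using theta_eq_0_iff[OF assms(2,1)] by blast
  thus False using assms(4) by contradiction
qed

lemma theta_pm_quotient_removable: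
  assumes p: "norm p < 1" and u: "u \<noteq> 0" "theta (u\<^sup>2) p \<noteq> 0"
    and F: "F holomorphic_on - {0}" "F u = 0"
  obtains g r where "r > 0" "g holomorphic_on ball u r"
    "\<And>y. y \<in> ball u r - {u} \<Longrightarrow> theta_pm y u p \<noteq> 0 \<and> g y = F y / theta_pm y u p"
proof -
  define h where "h y = (if y = u then deriv F u else (F y - F u) / (y - u))" for y
  have h: "h holomorphic_on - {0}"
    unfolding h_def by (rule pole_lemma_open[OF F(1)]) auto
  \<comment> \<open>Split off the simple zero of theta (y / u) p at y = u; E u \<noteq> 0 because
    theta (u^2) p \<noteq> 0.\<close>
  define E where "E y = - theta_reduced (y / u) p * theta (y * u) p / u" for y
  have E: "E holomorphic_on - {0}"
    unfolding E_def using p u by (intro holomorphic_intros) auto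
  have D: "theta_pm y u p = (y - u) * E y" for y
    using p u by (simp add: theta_pm_def E_def theta_eq_reduced[of p "y / u"] field_simps)
  have "E u \<noteq> 0"
    using p u theta_reduced_1_nonzero[OF p] by (simp add: E_def power2_eq_square)
  moreover have "continuous (at u) E"
    using u by (intro holomorphic_on_imp_continuous_at[OF E]) auto
  ultimately obtain r where r: "r > 0" "\<And>y. dist u y < r \<Longrightarrow> E y \<noteq> 0"
    using continuous_at_avoid by blast
  define r' where "r' = min r (norm u)"
  have ball: "ball u r' \<subseteq> - {0}"
    by (auto simp: r'_def dist_norm)
  have E_nonzero: "E y \<noteq> 0" if "y \<in> ball u r'" for y
    using that r by (simp add: r'_def)
  show ?thesis
  proof
    show "0 < r'" using r u by (simp add: r'_def)
    show "(\<lambda>y. h y / E y) holomorphic_on ball u r'"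
      using E_nonzero ball by (intro holomorphic_on_divide holomorphic_on_subset[OF h]
          holomorphic_on_subset[OF E]) auto
    show "theta_pm y u p \<noteq> 0 \<and> h y / E y = F y / theta_pm y u p" if "y \<in> ball u r' - {u}" for y
      using that E_nonzero[of y] by (simp add: D h_def F(2))
  qed
qed

lemma theta_pm_quotient_extension:
  assumes p: "p \<noteq> 0" "norm p < 1" and u: "u \<noteq> 0" "theta (u\<^sup>2) p \<noteq> 0"
    and F: "F holomorphic_on - {0}" and F_mult_p: "\<And>x. x \<noteq> 0 \<Longrightarrow> F (p * x) = F x / x\<^sup>2"
    and F_zeros: "F u = 0" "F (inverse u) = 0"
  obtains G where "G holomorphic_on - {0}" "\<And>x. x \<noteq> 0 \<Longrightarrow> G (p * x) = G x"
    "\<And>x. theta_pm x u p \<noteq> 0 \<Longrightarrow> G x = F x / theta_pm x u p"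
proof -
  define D where "D x = theta_pm x u p" for x
  define orbit_u where "orbit_u x \<longleftrightarrow> (\<exists>k::int. x = p powi k * u)" for x
  have base_points: "D u = 0" "D (inverse u) = 0" "orbit_u u" "\<not> orbit_u (inverse u)"
    using p u theta_pm_inverse_right[of "inverse u" u p] inverse_not_in_powi_orbit[OF p u]
    by (auto simp: D_def orbit_u_def intro: exI[of _ 0])
  have D_hol: "D holomorphic_on - {0}"
    unfolding D_def using p(2) u(1) by (intro holomorphic_intros) auto
  have orbit_u_mult_p: "orbit_u (p * x) \<longleftrightarrow> orbit_u x" for x
  proof -
    have "orbit_u (p * x) \<longleftrightarrow> (\<exists>k::int. x = p powi (k - 1) * u)"
      using p by (auto simp: orbit_u_def power_int_diff field_simps)
    also have "\<dots> \<longleftrightarrow> orbit_u x"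
      unfolding orbit_u_def by (metis add_diff_cancel_right')
    finally show ?thesis .
  qed
  obtain g1 r1 where g1: "r1 > 0" "g1 holomorphic_on ball u r1"
    "\<And>y. y \<in> ball u r1 - {u} \<Longrightarrow> D y \<noteq> 0 \<and> g1 y = F y / D y"
    using theta_pm_quotient_removable[OF p(2) u F F_zeros(1)] unfolding D_def by blast
  have "inverse u \<noteq> 0" "theta ((inverse u)\<^sup>2) p \<noteq> 0"
    using theta_inverse[OF p(2), of "u\<^sup>2"] u by (simp_all add: power_inverse)
  then obtain g2 r2 where g2: "r2 > 0" "g2 holomorphic_on ball (inverse u) r2"
    "\<And>y. y \<in> ball (inverse u) r2 - {inverse u} \<Longrightarrow> D y \<noteq> 0 \<and> g2 y = F y / D y"
    using theta_pm_quotient_removable[OF p(2) _ _ F F_zeros(2)]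
    unfolding D_def theta_pm_inverse_right by blast
  \<comment> \<open>The zeros of D are the orbits of u and inverse u under multiplication by powers of p, which
    are disjoint because theta (u^2) p \<noteq> 0; on each orbit G takes the value of the removable
    singularity at the base point.\<close>
  define G where
    "G x = (if D x \<noteq> 0 then F x / D x else if orbit_u x then g1 u else g2 (inverse u))" for x
  have G_mult_p: "G (p * x) = G x" if "x \<noteq> 0" for x
    using that theta_pm_mult_p[OF p(2,1) that u(1)]
    by (simp add: G_def D_def F_mult_p orbit_u_mult_p)
  have diff_u: "G field_differentiable at u"
  proof (rule field_differentiable_transform_within[OF g1(1) UNIV_I])
    show "g1 field_differentiable at u within UNIV"
      using g1 by (simp add: holomorphic_on_imp_differentiable_at)
    show "g1 y = G y" if "dist y u < r1" for y
      using that g1(3)[of y] base_points by (cases "y = u") (auto simp: G_def dist_commute)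
  qed
  have diff_inverse_u: "G field_differentiable at (inverse u)"
  proof (rule field_differentiable_transform_within[OF g2(1) UNIV_I])
    show "g2 field_differentiable at (inverse u) within UNIV"
      using g2 by (simp add: holomorphic_on_imp_differentiable_at)
    show "g2 y = G y" if "dist y (inverse u) < r2" for y
      using that g2(3)[of y] base_points by (cases "y = inverse u") (auto simp: G_def dist_commute)
  qed
  have "G field_differentiable at x" if x: "x \<noteq> 0" for x
  proof (cases "D x = 0")
    case True
    then obtain k :: int where "x = p powi k * u \<or> x = p powi k * inverse u"
      using theta_pm_eq_0_iff[OF p(2,1) x u(1)] by (auto simp: D_def)
    thus ?thesis
      using field_differentiable_periodic_orbit[of p G, OF p(1) G_mult_p] u(1) diff_u diff_inverse_u
      by auto
  next
    case False
    show ?thesis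
      by (rule field_differentiable_quotient[OF F D_hol open_Compl _ False]) (use x in \<open>simp_all add: G_def\<close>)
  qed
  hence "G holomorphic_on - {0}"
    unfolding holomorphic_on_def using field_differentiable_at_within by blast
  moreover have "G x = F x / theta_pm x u p" if "theta_pm x u p \<noteq> 0" for x
    using that by (simp add: G_def D_def)
  ultimately show ?thesis
    using that G_mult_p by blast
qed

lemma theta_pm_function_space:
  assumes p: "p \<noteq> 0" "norm p < 1" and u: "u \<noteq> 0" "theta (u\<^sup>2) p \<noteq> 0"
    and F: "F holomorphic_on - {0}" and F_mult_p: "\<And>x. x \<noteq> 0 \<Longrightarrow> F (p * x) = F x / x\<^sup>2"
    and F_zeros: "F u = 0" "F (inverse u) = 0"
  obtains K where "\<And>x. x \<noteq> 0 \<Longrightarrow> F x = K * theta_pm x u p"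
proof -
  obtain G where G: "G holomorphic_on - {0}" "\<And>x. x \<noteq> 0 \<Longrightarrow> G (p * x) = G x"
    "\<And>x. theta_pm x u p \<noteq> 0 \<Longrightarrow> G x = F x / theta_pm x u p"
    using theta_pm_quotient_extension[OF assms] by blast
  obtain c where c: "\<And>x. x \<noteq> 0 \<Longrightarrow> G x = c"
    using multiplicatively_periodic_imp_constant[OF p G(1,2)] by blast
  have "F x = c * theta_pm x u p" if x: "x \<noteq> 0" for x
  proof (cases "theta_pm x u p = 0")
    case True
    then obtain k :: int where "x = p powi k * u \<or> x = p powi k * inverse u"
      using theta_pm_eq_0_iff[OF p(2,1) x u(1)] by blast
    hence "F x = 0"
      using quasi_periodic_zero_powi[of p F, OF p(1) F_mult_p] F_zeros u(1) by auto
    thus ?thesis using True by simp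
  next
    case False
    thus ?thesis using G(3)[OF False] c[OF x] by (simp add: field_simps)
  qed
  thus ?thesis using that by blast
qed

lemma theta_addition_generic:
  assumes p: "p \<noteq> 0" "norm p < 1" and nz: "x \<noteq> 0" "y \<noteq> 0" "u \<noteq> 0" "v \<noteq> 0"
    and generic: "theta (u\<^sup>2) p \<noteq> 0" "theta_pm y u p \<noteq> 0"
  shows "theta_pm x y p * theta_pm u v p - theta_pm x v p * theta_pm u y p
       = u / y * theta_pm y v p * theta_pm x u p"
proof -
  define F where "F z = theta_pm z y p * theta_pm u v p - theta_pm z v p * theta_pm u y p
      - u / y * theta_pm y v p * theta_pm z u p" for z
  have "F holomorphic_on - {0}"
    unfolding F_def using p nz by (intro holomorphic_intros) auto
  moreover have "F (p * z) = F z / z\<^sup>2" if "z \<noteq> 0" for z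
    unfolding F_def theta_pm_mult_p[OF p(2,1) that nz(2)] theta_pm_mult_p[OF p(2,1) that nz(3)]
      theta_pm_mult_p[OF p(2,1) that nz(4)]
    using that by (simp add: field_simps)
  moreover have "F u = 0"
    using p nz by (simp add: F_def)
  moreover have "F (inverse u) = 0"
  proof -
    have "F (inverse u) = F u / u\<^sup>2"
      unfolding F_def theta_pm_inverse[OF p(2) nz(3) nz(2)] theta_pm_inverse[OF p(2) nz(3) nz(3)]
        theta_pm_inverse[OF p(2) nz(3) nz(4)]
      using nz by (simp add: field_simps)
    thus ?thesis using \<open>F u = 0\<close> by simp
  qed
  ultimately obtain K where K: "\<And>z. z \<noteq> 0 \<Longrightarrow> F z = K * theta_pm z u p"
    using theta_pm_function_space[OF p nz(3) generic(1)] by blast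
  have "F y = - theta_pm y v p * (theta_pm u y p + u / y * theta_pm y u p)"
    using p nz by (simp add: F_def algebra_simps)
  hence "F y = 0"
    using theta_pm_swap[OF p(2) nz(2,3)] by simp
  hence "K = 0" using K[OF nz(2)] generic(2) by simp
  thus ?thesis using K[OF nz(1)] by (simp add: F_def)
qed

lemma countable_addition_exceptions:
  assumes "p \<noteq> 0" "norm p < 1" "y \<noteq> 0"
  shows "countable {w. theta (w\<^sup>2) p = 0 \<or> theta_pm y w p = 0}"
proof (rule countable_subset)
  define Z where "Z = {z. theta z p = 0}"
  show "countable (csqrt ` Z \<union> uminus ` csqrt ` Z \<union> (\<lambda>z. z / y) ` Z \<union> (\<lambda>z. y / z) ` Z)"
    unfolding Z_def using countable_theta_zeros[OF assms(1,2)] by simp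
  show "{w. theta (w\<^sup>2) p = 0 \<or> theta_pm y w p = 0}
      \<subseteq> csqrt ` Z \<union> uminus ` csqrt ` Z \<union> (\<lambda>z. z / y) ` Z \<union> (\<lambda>z. y / z) ` Z"
  proof
    fix w assume "w \<in> {w. theta (w\<^sup>2) p = 0 \<or> theta_pm y w p = 0}"
    hence "w\<^sup>2 \<in> Z \<or> y * w \<in> Z \<or> y / w \<in> Z"
      by (auto simp: Z_def theta_pm_def)
    moreover have "w = csqrt (w\<^sup>2) \<or> w = - csqrt (w\<^sup>2)"
      using power2_eq_iff[of w "csqrt (w\<^sup>2)"] by simp
    moreover have "w = y * w / y" using assms(3) by simp
    moreover have "y / w \<in> Z \<Longrightarrow> w = y / (y / w)"
      using assms(3) by (cases "w = 0") (auto simp: Z_def)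
    ultimately show "w \<in> csqrt ` Z \<union> uminus ` csqrt ` Z \<union> (\<lambda>z. z / y) ` Z \<union> (\<lambda>z. y / z) ` Z"
      by blast
  qed
qed

theorem theta_addition:
  assumes p: "norm p < 1" and nz: "x \<noteq> 0" "y \<noteq> 0" "u \<noteq> 0" "v \<noteq> 0"
  shows "theta_pm x y p * theta_pm u v p - theta_pm x v p * theta_pm u y p
       = u / y * theta_pm y v p * theta_pm x u p"
proof (cases "p = 0")
  case True
  thus ?thesis using nz by (simp add: theta_pm_def theta_0_right field_simps)
next
  case False
  define \<Phi> where "\<Phi> w = theta_pm x y p * theta_pm w v p - theta_pm x v p * theta_pm w y p
      - w / y * theta_pm y v p * theta_pm x w p" for w
  define B where "B = insert 0 {w. theta (w\<^sup>2) p = 0 \<or> theta_pm y w p = 0}"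
  have "countable B"
    unfolding B_def using countable_addition_exceptions[OF False p nz(2)] by simp
  moreover have "\<Phi> w = 0" if "w \<notin> B" for w
    using theta_addition_generic[OF False p nz(1,2) _ nz(4)] that by (simp add: \<Phi>_def B_def)
  moreover have "continuous (at u) \<Phi>"
  proof -
    have "\<Phi> holomorphic_on - {0}"
      unfolding \<Phi>_def theta_pm_def[of x] using p nz by (intro holomorphic_intros) auto
    thus ?thesis
      using nz(3) by (intro holomorphic_on_imp_continuous_at) auto
  qed
  ultimately show ?thesis
    using continuous_at_vanishing_off_countable[of u \<Phi> B] by (simp add: \<Phi>_def)
qed

section \<open>The indefinite bibasic sum\<close>

lemma theta_three_term:
  fixes a b c X Y p :: complex
  assumes p: "norm p < 1" and nz: "a \<noteq> 0" "b \<noteq> 0" "c \<noteq> 0" "X \<noteq> 0" "Y \<noteq> 0"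
  shows "theta (a * X) p * theta (b * X) p * theta (c * Y) p * theta (a * Y / (b * c)) p
       - theta Y p * theta (a * Y / b) p * theta (a * X / c) p * theta (b * c * X) p
       = Y * theta (a * X * Y) p * theta (b * X / Y) p * theta c p * theta (a / (b * c)) p"
proof -
  define s where "s = csqrt (a * b)"
  have s2: "s * s = a * b"
    using power2_csqrt[of "a * b"] by (simp add: s_def power2_eq_square)
  hence s: "s \<noteq> 0" using nz by auto
  define x y u v where "x = X * s" and "y = a / s" and "u = Y * a / s" and "v = c * s / a"
  have "x \<noteq> 0" "y \<noteq> 0" "u \<noteq> 0" "v \<noteq> 0"
    using nz s by (simp_all add: x_def y_def u_def v_def)
  note addition = theta_addition[OF p this]
  have "x * y = a * X" "x / y = b * X" "u * v = c * Y" "u / v = a * Y / (b * c)"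
    "x * v = b * c * X" "x / v = a * X / c" "u * y = a * Y / b" "u / y = Y"
    "y * v = c" "y / v = a / (b * c)" "x * u = a * X * Y" "x / u = b * X / Y"
    using nz s s2 by (simp_all add: x_def y_def u_def v_def field_simps)
  with addition show ?thesis
    by (simp add: theta_pm_def mult_ac)
qed

lemma epoch_0 [simp]: "epoch a q p 0 = 1"
  by (simp add: epoch_def)

lemma epoch_Suc: "epoch a q p (Suc m) = epoch a q p m * theta (a * q ^ m) p"
  by (simp add: epoch_def)

lemma epoch_Suc_left: "epoch a q p (Suc m) = theta a p * epoch (a * q) q p m"
  unfolding epoch_def by (subst prod.lessThan_Suc_shift) (simp add: mult.assoc)

definition bibasic_num ::
  "complex \<Rightarrow> complex \<Rightarrow> complex \<Rightarrow> complex \<Rightarrow> complex \<Rightarrow> complex \<Rightarrow> nat \<Rightarrow> complex" where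
  "bibasic_num a b c q r p m =
    epoch (a * r) r p m * epoch (b * r) r p m * epoch (c * q) q p m * epoch (a * q / (b * c)) q p m"

definition bibasic_den ::
  "complex \<Rightarrow> complex \<Rightarrow> complex \<Rightarrow> complex \<Rightarrow> complex \<Rightarrow> complex \<Rightarrow> nat \<Rightarrow> complex" where
  "bibasic_den a b c q r p m =
    epoch q q p m * epoch (a * q / b) q p m * epoch (a * r / c) r p m * epoch (b * c * r) r p m"

definition bibasic_term ::
  "complex \<Rightarrow> complex \<Rightarrow> complex \<Rightarrow> complex \<Rightarrow> complex \<Rightarrow> complex \<Rightarrow> nat \<Rightarrow> complex" where
  "bibasic_term a b c q r p k =
    theta (a * r ^ k * q ^ k) p * theta (b * r ^ k * inverse q ^ k) p / (theta a p * theta b p)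
    * (epoch a r p k * epoch b r p k * epoch c q p k * epoch (a / (b * c)) q p k)
    / bibasic_den a b c q r p k * q ^ k"

lemma bibasic_term_Suc:
  assumes p: "norm p < 1" and nz: "a \<noteq> 0" "b \<noteq> 0" "c \<noteq> 0" "q \<noteq> 0" "r \<noteq> 0"
    and theta_ab: "theta a p * theta b p \<noteq> 0" and den: "bibasic_den a b c q r p (Suc m) \<noteq> 0"
  shows "bibasic_term a b c q r p (Suc m)
       = bibasic_num a b c q r p (Suc m) / bibasic_den a b c q r p (Suc m)
         - bibasic_num a b c q r p m / bibasic_den a b c q r p m"
proof -
  define X Y where "X = r ^ Suc m" and "Y = q ^ Suc m"
  define \<mu> where "\<mu> = theta Y p * theta (a * Y / b) p * theta (a * X / c) p * theta (b * c * X) p"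
  define \<nu> where "\<nu> = theta (a * X) p * theta (b * X) p * theta (c * Y) p * theta (a * Y / (b * c)) p"
  define T where "T = Y * theta (a * X * Y) p * theta (b * X / Y) p * theta c p * theta (a / (b * c)) p"
  have den_Suc: "bibasic_den a b c q r p (Suc m) = bibasic_den a b c q r p m * \<mu>"
    by (simp add: bibasic_den_def epoch_Suc \<mu>_def X_def Y_def mult_ac)
  have num_Suc: "bibasic_num a b c q r p (Suc m) = bibasic_num a b c q r p m * \<nu>"
    by (simp add: bibasic_num_def epoch_Suc \<nu>_def X_def Y_def mult_ac)
  have epochs: "epoch a r p (Suc m) * epoch b r p (Suc m) * epoch c q p (Suc m)
      * epoch (a / (b * c)) q p (Suc m) = theta a p * theta b p * (theta c p * theta (a / (b * c)) p * bibasic_num a b c q r p m)"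
    by (simp add: bibasic_num_def epoch_Suc_left mult_ac)
  have term_Suc:
    "bibasic_term a b c q r p (Suc m) = T * bibasic_num a b c q r p m / bibasic_den a b c q r p (Suc m)"
    unfolding bibasic_term_def epochs power_inverse X_def[symmetric] Y_def[symmetric]
    using theta_ab by (simp add: T_def field_simps)
  have "\<nu> - \<mu> = T"
    using theta_three_term[OF p nz(1-3), of X Y] nz by (simp add: \<mu>_def \<nu>_def T_def X_def Y_def)
  moreover have "bibasic_den a b c q r p m \<noteq> 0" "\<mu> \<noteq> 0"
    using den by (simp_all add: den_Suc)
  ultimately show ?thesis
    by (simp add: term_Suc num_Suc den_Suc field_simps)
qed

lemma bibasic_sum:
  assumes p: "norm p < 1" and nz: "a \<noteq> 0" "b \<noteq> 0" "c \<noteq> 0" "q \<noteq> 0" "r \<noteq> 0"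
    and theta_ab: "theta a p * theta b p \<noteq> 0" and den: "bibasic_den a b c q r p m \<noteq> 0"
  shows "(\<Sum>k=0..m. bibasic_term a b c q r p k) = bibasic_num a b c q r p m / bibasic_den a b c q r p m"
  using den
proof (induction m)
  case 0
  show ?case using theta_ab by (simp add: bibasic_term_def bibasic_num_def bibasic_den_def)
next
  case (Suc m)
  have "bibasic_den a b c q r p m \<noteq> 0"
    using Suc.prems by (simp add: bibasic_den_def epoch_Suc)
  thus ?case
    using Suc.IH bibasic_term_Suc[OF p nz theta_ab Suc.prems] by simp
qed

section \<open>Reversal\<close>

lemma epoch_split_top:
  assumes "k \<le> n"
  shows "epoch x q p n = epoch x q p (n - k) * (\<Prod>i<k. theta (x * q ^ (n - 1 - i)) p)"
  using assms
proof (induction k)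
  case (Suc k)
  have "n - k = Suc (n - Suc k)" "n - 1 - k = n - Suc k"
    using Suc.prems by simp_all
  thus ?case using Suc by (simp add: epoch_Suc mult_ac)
qed simp

definition reversal_factor :: "complex \<Rightarrow> complex \<Rightarrow> nat \<Rightarrow> nat \<Rightarrow> complex" where
  "reversal_factor x q n k = (\<Prod>i<k. - (x * q ^ (n - 1 - i)))"

lemma epoch_reverse:
  assumes p: "norm p < 1" and nz: "x \<noteq> 0" "q \<noteq> 0" and "k \<le> n" and z: "z * x * q ^ n = q"
  shows "epoch x q p n = epoch x q p (n - k) * reversal_factor x q n k * epoch z q p k"
proof -
  have "theta (x * q ^ (n - 1 - i)) p = - (x * q ^ (n - 1 - i)) * theta (z * q ^ i) p" if "i < k" for i
  proof -
    define j where "j = n - 1 - i"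
    define w where "w = x * q ^ j"
    have "n = Suc (i + j)" using that \<open>k \<le> n\<close> by (simp add: j_def)
    hence "z * q ^ i * w * q = q" using z by (simp add: w_def power_add mult_ac)
    hence "z * q ^ i = inverse w" using nz by (simp add: w_def field_simps)
    moreover have "w \<noteq> 0" using nz by (simp add: w_def)
    ultimately have "theta w p = - w * theta (z * q ^ i) p"
      using theta_inverse[OF p, of w] by simp
    thus ?thesis by (simp add: w_def j_def)
  qed
  hence "(\<Prod>i<k. theta (x * q ^ (n - 1 - i)) p) = reversal_factor x q n k * epoch z q p k"
    by (simp add: reversal_factor_def epoch_def prod.distrib[symmetric])
  thus ?thesis using epoch_split_top[OF \<open>k \<le> n\<close>] by (simp add: mult.assoc)
qed

lemma reversal_factor_mult:
  assumes "x * y = x' * y'"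
  shows "reversal_factor x q n k * reversal_factor y q n k
       = reversal_factor x' q n k * reversal_factor y' q n k"
proof -
  have "- (x * t) * - (y * t) = - (x' * t) * - (y' * t)" for t
  proof -
    have "- (x * t) * - (y * t) = x * y * (t * t)" by (simp add: algebra_simps)
    also have "\<dots> = - (x' * t) * - (y' * t)" using assms by (simp add: algebra_simps)
    finally show ?thesis .
  qed
  thus ?thesis
    unfolding reversal_factor_def prod.distrib[symmetric] by (intro prod.cong refl)
qed

text \<open>Reversing the products in bibasic_num and bibasic_den with epoch_reverse leaves the
  following products, which are the factors with r^-n and q^-n in the summand of the theorem.\<close>

definition bibasic_num_rev ::
  "complex \<Rightarrow> complex \<Rightarrow> complex \<Rightarrow> complex \<Rightarrow> complex \<Rightarrow> complex \<Rightarrow> nat \<Rightarrow> nat \<Rightarrow> complex" where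
  "bibasic_num_rev a b c q r p n k =
    epoch (inverse q ^ n / c) q p k * epoch (b * c * inverse q ^ n / a) q p k
    * epoch (inverse r ^ n / a) r p k * epoch (inverse r ^ n / b) r p k"

definition bibasic_den_rev ::
  "complex \<Rightarrow> complex \<Rightarrow> complex \<Rightarrow> complex \<Rightarrow> complex \<Rightarrow> complex \<Rightarrow> nat \<Rightarrow> nat \<Rightarrow> complex" where
  "bibasic_den_rev a b c q r p n k =
    epoch (c * inverse r ^ n / a) r p k * epoch (inverse r ^ n / (b * c)) r p k
    * epoch (inverse q ^ n) q p k * epoch (b * inverse q ^ n / a) q p k"

lemma bibasic_num_reverse:
  assumes p: "norm p < 1" and nz: "a \<noteq> 0" "b \<noteq> 0" "c \<noteq> 0" "q \<noteq> 0" "r \<noteq> 0" and "k \<le> n"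
  shows "bibasic_num a b c q r p n = bibasic_num a b c q r p (n - k)
      * (reversal_factor (a * r) r n k * reversal_factor (b * r) r n k
         * (reversal_factor (c * q) q n k * reversal_factor (a * q / (b * c)) q n k))
      * bibasic_num_rev a b c q r p n k"
proof -
  note rev = epoch_reverse[OF p _ _ \<open>k \<le> n\<close>]
  have "epoch (a * r) r p n
      = epoch (a * r) r p (n - k) * reversal_factor (a * r) r n k * epoch (inverse r ^ n / a) r p k"
    "epoch (b * r) r p n
      = epoch (b * r) r p (n - k) * reversal_factor (b * r) r n k * epoch (inverse r ^ n / b) r p k"
    "epoch (c * q) q p n
      = epoch (c * q) q p (n - k) * reversal_factor (c * q) q n k * epoch (inverse q ^ n / c) q p k"
    "epoch (a * q / (b * c)) q p n = epoch (a * q / (b * c)) q p (n - k)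
      * reversal_factor (a * q / (b * c)) q n k * epoch (b * c * inverse q ^ n / a) q p k"
    by (rule rev; use nz in \<open>simp add: power_inverse field_simps\<close>)+
  thus ?thesis by (simp add: bibasic_num_def bibasic_num_rev_def mult_ac)
qed

lemma bibasic_den_reverse:
  assumes p: "norm p < 1" and nz: "a \<noteq> 0" "b \<noteq> 0" "c \<noteq> 0" "q \<noteq> 0" "r \<noteq> 0" and "k \<le> n"
  shows "bibasic_den a b c q r p n = bibasic_den a b c q r p (n - k)
      * (reversal_factor (a * r / c) r n k * reversal_factor (b * c * r) r n k
         * (reversal_factor q q n k * reversal_factor (a * q / b) q n k))
      * bibasic_den_rev a b c q r p n k"
proof -
  note rev = epoch_reverse[OF p _ _ \<open>k \<le> n\<close>]
  have "epoch q q p n = epoch q q p (n - k) * reversal_factor q q n k * epoch (inverse q ^ n) q p k"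
    "epoch (a * q / b) q p n
      = epoch (a * q / b) q p (n - k) * reversal_factor (a * q / b) q n k * epoch (b * inverse q ^ n / a) q p k"
    "epoch (a * r / c) r p n
      = epoch (a * r / c) r p (n - k) * reversal_factor (a * r / c) r n k * epoch (c * inverse r ^ n / a) r p k"
    "epoch (b * c * r) r p n
      = epoch (b * c * r) r p (n - k) * reversal_factor (b * c * r) r n k * epoch (inverse r ^ n / (b * c)) r p k"
    by (rule rev; use nz in \<open>simp add: power_inverse field_simps\<close>)+
  thus ?thesis by (simp add: bibasic_den_def bibasic_den_rev_def mult_ac)
qed

lemma bibasic_ratio_reverse:
  assumes p: "norm p < 1" and nz: "a \<noteq> 0" "b \<noteq> 0" "c \<noteq> 0" "q \<noteq> 0" "r \<noteq> 0" and "k \<le> n"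
    and num_rev: "bibasic_num_rev a b c q r p n k \<noteq> 0" and den: "bibasic_den a b c q r p n \<noteq> 0"
  shows "bibasic_num a b c q r p (n - k) / bibasic_den a b c q r p (n - k)
       = bibasic_den_rev a b c q r p n k / bibasic_num_rev a b c q r p n k
         * (bibasic_num a b c q r p n / bibasic_den a b c q r p n)"
proof -
  define R where "R x s = reversal_factor x s n k" for x s
  note num_eq = bibasic_num_reverse[OF assms(1-7), folded R_def]
  note den_eq = bibasic_den_reverse[OF assms(1-7), folded R_def]
  have "R (a * r) r * R (b * r) r = R (a * r / c) r * R (b * c * r) r"
    "R (c * q) q * R (a * q / (b * c)) q = R q q * R (a * q / b) q"
    unfolding R_def by (intro reversal_factor_mult; use nz in \<open>simp add: field_simps\<close>)+
  hence factors: "R (a * r) r * R (b * r) r * (R (c * q) q * R (a * q / (b * c)) q)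
      = R (a * r / c) r * R (b * c * r) r * (R q q * R (a * q / b) q)"
    by simp
  have "bibasic_den a b c q r p (n - k) \<noteq> 0" "bibasic_den_rev a b c q r p n k \<noteq> 0"
    "R (a * r / c) r * R (b * c * r) r * (R q q * R (a * q / b) q) \<noteq> 0"
    using den unfolding den_eq by auto
  thus ?thesis
    unfolding num_eq den_eq factors using num_rev by (simp add: field_simps)
qed

section \<open>Pairing two indefinite sums\<close>

lemma sum_triangle_swap:
  fixes f g :: "nat \<Rightarrow> 'a::comm_semiring_0"
  shows "(\<Sum>k=0..n. f k * (\<Sum>j=0..n-k. g j)) = (\<Sum>j=0..n. g j * (\<Sum>k=0..n-j. f k))"
proof -
  have triangle: "{j. j \<le> n \<and> i + j \<le> n} = {0..n - i}" "{j. j \<le> n \<and> j + i \<le> n} = {0..n - i}"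
    if "i \<le> n" for i
    using that by auto
  have "(\<Sum>k=0..n. f k * (\<Sum>j=0..n-k. g j)) = (\<Sum>k=0..n. \<Sum>j\<in>{j \<in> {0..n}. k + j \<le> n}. f k * g j)"
    by (intro sum.cong refl) (simp add: triangle sum_distrib_left)
  also have "\<dots> = (\<Sum>j=0..n. \<Sum>k\<in>{k \<in> {0..n}. k + j \<le> n}. f k * g j)"
    by (rule sum.swap_restrict) simp_all
  also have "\<dots> = (\<Sum>j=0..n. g j * (\<Sum>k=0..n-j. f k))"
    by (intro sum.cong refl) (simp add: triangle sum_distrib_left mult.commute)
  finally show ?thesis .
qed

lemma sum_pairing_reversed:
  fixes f F g G S T :: "nat \<Rightarrow> 'a::field"
  assumes f: "\<And>m. m \<le> n \<Longrightarrow> (\<Sum>k=0..m. f k) = S m"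
    and F: "\<And>m. m \<le> n \<Longrightarrow> (\<Sum>k=0..m. F k) = T m"
    and g: "\<And>k. k \<le> n \<Longrightarrow> S (n - k) = g k * S n"
    and G: "\<And>k. k \<le> n \<Longrightarrow> T (n - k) = G k * T n"
    and T: "T n \<noteq> 0"
  shows "(\<Sum>k=0..n. f k * G k) = S n / T n * (\<Sum>k=0..n. F k * g k)"
proof -
  have "(\<Sum>k=0..n. f k * G k) = (\<Sum>k=0..n. f k * T (n - k)) / T n"
    unfolding sum_divide_distrib using G T by (intro sum.cong) auto
  also have "(\<Sum>k=0..n. f k * T (n - k)) = (\<Sum>k=0..n. f k * (\<Sum>j=0..n-k. F j))"
    using F by (intro sum.cong) auto
  also have "\<dots> = (\<Sum>j=0..n. F j * (\<Sum>k=0..n-j. f k))"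
    by (rule sum_triangle_swap)
  also have "\<dots> = (\<Sum>j=0..n. F j * g j) * S n"
    unfolding sum_distrib_right using f g by (intro sum.cong) auto
  finally show ?thesis by simp
qed

lemma bibasic_pairing:
  fixes a b c q r p A B C Q R P :: complex
  assumes p: "norm p < 1" "norm P < 1"
    and nz: "a \<noteq> 0" "b \<noteq> 0" "c \<noteq> 0" "q \<noteq> 0" "r \<noteq> 0" "A \<noteq> 0" "B \<noteq> 0" "C \<noteq> 0" "Q \<noteq> 0" "R \<noteq> 0"
    and lower: "\<And>k. k \<le> n \<Longrightarrow>
      theta a p * theta b p * bibasic_den a b c q r p k * bibasic_num_rev A B C Q R P n k \<noteq> 0"
    and upper: "\<And>k. k \<le> n \<Longrightarrow>
      theta A P * theta B P * bibasic_den A B C Q R P k * bibasic_num_rev a b c q r p n k \<noteq> 0"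
    and num: "bibasic_num A B C Q R P n \<noteq> 0"
  shows "(\<Sum>k=0..n. bibasic_term a b c q r p k
            * (bibasic_den_rev A B C Q R P n k / bibasic_num_rev A B C Q R P n k))
       = bibasic_num a b c q r p n / bibasic_den a b c q r p n
         / (bibasic_num A B C Q R P n / bibasic_den A B C Q R P n)
         * (\<Sum>k=0..n. bibasic_term A B C Q R P k
            * (bibasic_den_rev a b c q r p n k / bibasic_num_rev a b c q r p n k))"
proof (rule sum_pairing_reversed)
  show "(\<Sum>k=0..m. bibasic_term a b c q r p k) = bibasic_num a b c q r p m / bibasic_den a b c q r p m"
    "(\<Sum>k=0..m. bibasic_term A B C Q R P k) = bibasic_num A B C Q R P m / bibasic_den A B C Q R P m"
    if "m \<le> n" for m
    using lower[OF that] upper[OF that] p nz by (simp_all add: bibasic_sum)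
  show "bibasic_num a b c q r p (n - k) / bibasic_den a b c q r p (n - k)
      = bibasic_den_rev a b c q r p n k / bibasic_num_rev a b c q r p n k
        * (bibasic_num a b c q r p n / bibasic_den a b c q r p n)"
    "bibasic_num A B C Q R P (n - k) / bibasic_den A B C Q R P (n - k)
      = bibasic_den_rev A B C Q R P n k / bibasic_num_rev A B C Q R P n k
        * (bibasic_num A B C Q R P n / bibasic_den A B C Q R P n)"
    if "k \<le> n" for k
    using lower[of n] lower[OF that] upper[of n] upper[OF that] that p nz
    by (simp_all add: bibasic_ratio_reverse)
  show "bibasic_num A B C Q R P n / bibasic_den A B C Q R P n \<noteq> 0"
    using num upper[of n] by simp
qed

lemma sum_den_eq:
  "sum_den a b c q r p A B C Q R P n k
     = theta a p * theta b p * bibasic_den a b c q r p k * bibasic_num_rev A B C Q R P n k"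
  by (simp add: sum_den_def bibasic_den_def bibasic_num_rev_def mult_ac)

lemma summand_eq:
  "summand a b c q r p A B C Q R P n k
     = bibasic_term a b c q r p k * (bibasic_den_rev A B C Q R P n k / bibasic_num_rev A B C Q R P n k)"
proof -
  have "sum_num a b c q r p A B C Q R P n k
      = theta (a * r ^ k * q ^ k) p * theta (b * r ^ k * inverse q ^ k) p
        * (epoch a r p k * epoch b r p k * epoch c q p k * epoch (a / (b * c)) q p k)
        * bibasic_den_rev A B C Q R P n k"
    by (simp add: sum_num_def bibasic_den_rev_def mult_ac)
  thus ?thesis
    by (simp add: summand_def sum_den_eq bibasic_term_def divide_inverse mult_ac)
qed

lemma pre_num_eq: "pre_num a b c q r p A B C Q R P n = bibasic_num a b c q r p n * bibasic_den A B C Q R P n"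
  by (simp add: pre_num_def bibasic_num_def bibasic_den_def mult_ac)

lemma pre_den_eq: "pre_den a b c q r p A B C Q R P n = bibasic_den a b c q r p n * bibasic_num A B C Q R P n"
  by (simp add: pre_den_def bibasic_num_def bibasic_den_def mult_ac)

theorem mainTheorem14:
  fixes a b c q r p A B C Q R P :: complex and n :: nat
  assumes "norm p < 1" and "norm P < 1"
    and "a \<noteq> 0" "b \<noteq> 0" "c \<noteq> 0" "q \<noteq> 0" "r \<noteq> 0"
    and "A \<noteq> 0" "B \<noteq> 0" "C \<noteq> 0" "Q \<noteq> 0" "R \<noteq> 0"
    and "\<And>k. k \<le> n \<Longrightarrow> sum_den a b c q r p A B C Q R P n k \<noteq> 0"
    and "\<And>k. k \<le> n \<Longrightarrow> sum_den A B C Q R P a b c q r p n k \<noteq> 0"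
    and "pre_den a b c q r p A B C Q R P n \<noteq> 0"
  shows "(\<Sum>k=0..n. summand a b c q r p A B C Q R P n k)
       = pre_num a b c q r p A B C Q R P n / pre_den a b c q r p A B C Q R P n
         * (\<Sum>k=0..n. summand A B C Q R P a b c q r p n k)"
proof -
  have "bibasic_num A B C Q R P n \<noteq> 0"
    using assms(15) by (simp add: pre_den_eq)
  from bibasic_pairing[OF assms(1-12) assms(13,14)[unfolded sum_den_eq] this]
  show ?thesis
    by (simp add: summand_eq pre_num_eq pre_den_eq)
qed

end
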